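(* As formal power series, $$\sum_{n=1}^{\infty}x^{e(n)}=\frac{1}{1-3x}.$$ Equivalently, for every integer $k\ge 0$, the number of positive integers $i$ with $e(i)=k$ is exactly $3^{k}$.
   Context: The Stern polynomials $B_n(t)\in\mathbb{Z}[t]$, $n\ge 0$, are defined by $B_0(t)=0$, $B_1(t)=1$, $B_{2n}(t)=tB_n(t)$ and $B_{2n+1}(t)=B_n(t)+B_{n+1}(t)$ for $n\ge 1$. For $n\ge 1$, $e(n)=\deg_t B_n(t)$. *)

theory Defs
  imports "HOL-Computational_Algebra.Computational_Algebra"
begin

function stern_poly :: "nat \<Rightarrow> int poly" where
  "stern_poly n =
     (if n = 0 then 0
      else if n = 1 then 1
      else if even n then [:0, 1:] * stern_poly (n div 2)
      else stern_poly (n div 2) + stern_poly (n div 2 + 1))"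
  by auto
termination
  by (relation "measure id") (auto elim!: oddE)

definition stern_deg :: "nat \<Rightarrow> nat" where
  "stern_deg n = degree (stern_poly n)"

end

theory Submission
  imports Defs
begin

(* All Stern polynomials B_n (n >= 1) have positive leading
   coefficient, so no cancellation happens in B_(2n+1) = B_n + B_(n+1), and the
   degrees e(n) = deg B_n satisfy
     e(2n) = e(n) + 1,   e(2n+1) = max (e n) (e (n+1)),   |e(n+1) - e(n)| <= 1.
   From these, e(4n+1) = e(n) + 1 and e(4n-1) = e(n) + 1 for n >= 1.  Since
   every i >= 2 is of exactly one of the forms 2m, 4m+1, 4m-1 with m >= 1, the
   level set L(k+1) = {i >= 1. e i = k+1} is the disjoint union of the images
   of L(k) under m |-> 2m, 4m+1, 4m-1, while L(0) = {1}. *)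

declare stern_poly.simps[simp del]

lemma stern_poly_1 [simp]: "stern_poly (Suc 0) = 1"
  by (subst stern_poly.simps) simp

lemma stern_poly_double: "n \<ge> 1 \<Longrightarrow> stern_poly (2 * n) = [:0, 1:] * stern_poly n"
  by (subst stern_poly.simps) auto

lemma stern_poly_odd: "n \<ge> 1 \<Longrightarrow> stern_poly (2 * n + 1) = stern_poly n + stern_poly (n + 1)"
  by (subst stern_poly.simps) auto

lemma lead_coeff_add_pos:
  fixes p q :: "'a :: linordered_idom poly"
  assumes p: "lead_coeff p > 0" and q: "lead_coeff q > 0"
  shows "lead_coeff (p + q) > 0 \<and> degree (p + q) = max (degree p) (degree q)"
proof (cases "degree p" "degree q" rule: linorder_cases)
  case less
  then show ?thesis using q by (simp add: degree_add_eq_right lead_coeff_add_le coeff_eq_0)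
next
  case equal
  then have pos: "coeff (p + q) (degree p) > 0" using p q by simp
  then have "degree p \<le> degree (p + q)" by (metis le_degree less_irrefl)
  moreover have "degree (p + q) \<le> degree p" using equal degree_add_le_max by (metis max.idem)
  ultimately show ?thesis using pos equal by auto
next
  case greater
  then show ?thesis using p by (simp add: degree_add_eq_left lead_coeff_add_le coeff_eq_0)
qed

text \<open>Positivity of leading coefficients propagates through both recursion
  branches; this is what makes the degree recursions below exact.\<close>
lemma stern_poly_lead_coeff_pos: "n \<ge> 1 \<Longrightarrow> lead_coeff (stern_poly n) > 0"
proof (induction n rule: less_induct)
  case (less n)
  show ?case
  proof (cases "n = 1")
    case False
    define m where "m = n div 2"
    have m: "m \<ge> 1" "m < n" using less.prems False unfolding m_def by auto
    have "n = 2 * m \<or> n = 2 * m + 1" unfolding m_def by auto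
    then show ?thesis
    proof
      assume n: "n = 2 * m"
      have "lead_coeff (stern_poly m) > 0" using less.IH m by simp
      moreover from this have "stern_poly m \<noteq> 0" by force
      ultimately show ?thesis using m n by (simp add: stern_poly_double lead_coeff_mult)
    next
      assume n: "n = 2 * m + 1"
      have "lead_coeff (stern_poly m) > 0" "lead_coeff (stern_poly (m + 1)) > 0"
        using less.IH m n by auto
      then show ?thesis unfolding n stern_poly_odd[OF m(1)] using lead_coeff_add_pos by blast
    qed
  qed simp
qed

lemma stern_poly_nonzero: "n \<ge> 1 \<Longrightarrow> stern_poly n \<noteq> 0"
  using stern_poly_lead_coeff_pos by fastforce

lemma stern_deg_1: "stern_deg 1 = 0"
  by (simp add: stern_deg_def)

lemma stern_deg_double: "n \<ge> 1 \<Longrightarrow> stern_deg (2 * n) = stern_deg n + 1"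
  by (simp add: stern_deg_def stern_poly_double stern_poly_nonzero degree_mult_eq)

lemma stern_deg_odd:
  assumes "n \<ge> 1"
  shows "stern_deg (2 * n + 1) = max (stern_deg n) (stern_deg (n + 1))"
  using lead_coeff_add_pos[OF stern_poly_lead_coeff_pos[of n] stern_poly_lead_coeff_pos[of "n + 1"]] assms
  unfolding stern_deg_def stern_poly_odd[OF assms] by simp

lemma stern_deg_2: "stern_deg 2 = 1"
  using stern_deg_double[of 1] stern_deg_1 by simp

lemma stern_deg_adjacent:
  "n \<ge> 1 \<Longrightarrow> stern_deg (n + 1) \<le> stern_deg n + 1 \<and> stern_deg n \<le> stern_deg (n + 1) + 1"
proof (induction n rule: less_induct)
  case (less n)
  show ?case
  proof (cases "n = 1")
    case True
    then show ?thesis using stern_deg_1 stern_deg_2 by (simp add: numeral_2_eq_2)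
  next
    case False
    define m where "m = n div 2"
    have m: "m \<ge> 1" "m < n" using less.prems False unfolding m_def by auto
    have "n = 2 * m \<or> n = 2 * m + 1" unfolding m_def by auto
    then show ?thesis
    proof
      assume n: "n = 2 * m"
      have "stern_deg (m + 1) \<le> stern_deg m + 1" using less.IH m by auto
      then show ?thesis using n m stern_deg_double[of m] stern_deg_odd[of m] by simp
    next
      assume n: "n = 2 * m + 1"
      have "stern_deg m \<le> stern_deg (m + 1) + 1" using less.IH m by auto
      moreover have "2 * m + 1 + 1 = 2 * (m + 1)" by simp
      ultimately show ?thesis using n m stern_deg_double[of "m + 1"] stern_deg_odd[of m] by simp
    qed
  qed
qed

text \<open>The two odd branches of the recursion, resolved using adjacency.\<close>
lemma stern_deg_4n_plus_1: "n \<ge> 1 \<Longrightarrow> stern_deg (4 * n + 1) = stern_deg n + 1"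
  using stern_deg_odd[of "2 * n"] stern_deg_double[of n] stern_deg_odd[of n] stern_deg_adjacent[of n]
  by (simp add: mult.assoc[symmetric])

lemma stern_deg_4n_minus_1: "n \<ge> 1 \<Longrightarrow> stern_deg (4 * n - 1) = stern_deg n + 1"
proof (cases "n = 1")
  case True
  then show ?thesis
    using stern_deg_odd[of 1] stern_deg_1 stern_deg_2 by (simp add: numeral_2_eq_2 numeral_3_eq_3)
next
  case False
  define m where "m = n - 1"
  assume "n \<ge> 1"
  with False have n: "n = m + 1" "m \<ge> 1" unfolding m_def by auto
  have "4 * n - 1 = 2 * (2 * m + 1) + 1" using n by simp
  then have "stern_deg (4 * n - 1) = max (stern_deg (2 * m + 1)) (stern_deg (2 * m + 1 + 1))"
    using stern_deg_odd[of "2 * m + 1"] by simp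
  also have "2 * m + 1 + 1 = 2 * (m + 1)" by simp
  finally show ?thesis
    using n stern_deg_double[of "m + 1"] stern_deg_odd[of m] stern_deg_adjacent[of m] by simp
qed

lemma stern_deg_parent:
  assumes "i \<ge> 2"
  obtains m where "m \<ge> 1" "i = 2 * m \<or> i = 4 * m + 1 \<or> i = 4 * m - 1"
    "stern_deg i = stern_deg m + 1"
proof -
  consider "i mod 4 = 0 \<or> i mod 4 = 2" | "i mod 4 = 1" | "i mod 4 = 3" by linarith
  then show ?thesis
  proof cases
    case 1
    define m where "m = i div 2"
    have "i = 2 * m" "m \<ge> 1" using 1 assms unfolding m_def by presburger+
    then show ?thesis using that stern_deg_double by blast
  next
    case 2
    define m where "m = i div 4"
    have "i = 4 * m + 1" "m \<ge> 1" using 2 assms unfolding m_def by presburger+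
    then show ?thesis using that stern_deg_4n_plus_1 by blast
  next
    case 3
    define m where "m = i div 4 + 1"
    have "i = 4 * m - 1" "m \<ge> 1" using 3 unfolding m_def by presburger+
    then show ?thesis using that stern_deg_4n_minus_1 by blast
  qed
qed

definition stern_level :: "nat \<Rightarrow> nat set" where
  "stern_level k = {i. 1 \<le> i \<and> stern_deg i = k}"

lemma stern_level_0: "stern_level 0 = {1}"
proof -
  have "stern_deg i \<noteq> 0" if "i \<ge> 2" for i
    by (rule stern_deg_parent[OF that]) simp
  then have "i \<in> stern_level 0 \<longleftrightarrow> i = 1" for i
    using stern_deg_1 unfolding stern_level_def by (cases "i \<ge> 2") auto
  then show ?thesis by blast
qed

lemma stern_level_Suc:
  "stern_level (Suc k) =
     (\<lambda>m. 2 * m) ` stern_level k \<union> (\<lambda>m. 4 * m + 1) ` stern_level k \<union> (\<lambda>m. 4 * m - 1) ` stern_level k"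
  (is "_ = ?A \<union> ?B \<union> ?C")
proof
  show "stern_level (Suc k) \<subseteq> ?A \<union> ?B \<union> ?C"
  proof
    fix i assume "i \<in> stern_level (Suc k)"
    then have i: "i \<ge> 1" "stern_deg i = Suc k" unfolding stern_level_def by auto
    then have "i \<ge> 2" using stern_deg_1 by (cases "i = 1") auto
    then obtain m where m: "m \<ge> 1" "i = 2 * m \<or> i = 4 * m + 1 \<or> i = 4 * m - 1"
      "stern_deg i = stern_deg m + 1"
      by (rule stern_deg_parent)
    then have "m \<in> stern_level k" using i unfolding stern_level_def by simp
    then show "i \<in> ?A \<union> ?B \<union> ?C" using m(2) by blast
  qed
next
  show "?A \<union> ?B \<union> ?C \<subseteq> stern_level (Suc k)"
    using stern_deg_double stern_deg_4n_plus_1 stern_deg_4n_minus_1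
    unfolding stern_level_def by auto
qed

text \<open>The three branches have pairwise disjoint images (residues 0, 1, 3 modulo 2
  resp. 4) and are injective on positive integers, so each level triples.\<close>
lemma stern_level_card: "finite (stern_level k) \<and> card (stern_level k) = 3 ^ k"
proof (induction k)
  case 0
  then show ?case by (simp add: stern_level_0)
next
  case (Suc k)
  let ?L = "stern_level k"
  let ?A = "(\<lambda>m. 2 * m) ` ?L" and ?B = "(\<lambda>m. 4 * m + 1) ` ?L" and ?C = "(\<lambda>m. 4 * m - 1) ` ?L"
  have pos: "\<forall>m \<in> ?L. m \<ge> 1" unfolding stern_level_def by simp
  have "card ?A = 3 ^ k" "card ?B = 3 ^ k" using Suc.IH by (simp_all add: card_image inj_on_def)
  moreover have "card ?C = 3 ^ k" using Suc.IH pos by (subst card_image) (auto simp: inj_on_def)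
  moreover have "?A \<inter> ?B = {}" by auto presburger
  moreover have "(?A \<union> ?B) \<inter> ?C = {}"
  proof -
    have "4 * x - 1 \<noteq> 2 * y" "4 * x - 1 \<noteq> 4 * y + 1" if "x \<ge> 1" for x y :: nat
      using that by presburger+
    then show ?thesis using pos by fastforce
  qed
  ultimately have "card (?A \<union> ?B \<union> ?C) = 3 ^ Suc k"
    using Suc.IH by (simp add: card_Un_disjoint)
  then show ?case using Suc.IH by (simp add: stern_level_Suc)
qed

lemma fps_inverse_geometric:
  fixes c :: "'a :: field"
  shows "inverse (1 - fps_const c * fps_X) = Abs_fps (\<lambda>n. c ^ n)"
proof -
  have "(1 - fps_const c * fps_X) * Abs_fps (\<lambda>n. c ^ n) = 1"
  proof (rule fps_ext)
    fix n
    show "((1 - fps_const c * fps_X) * Abs_fps (\<lambda>n. c ^ n)) $ n = (1 :: 'a fps) $ n"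
      by (cases n) (simp_all add: algebra_simps fps_X_mult_nth)
  qed
  then show ?thesis by (rule fps_inverse_unique)
qed

theorem theorem4p1:
  shows "(\<forall>k. finite {i::nat. 1 \<le> i \<and> stern_deg i = k}) \<and>
         Abs_fps (\<lambda>k. of_nat (card {i::nat. 1 \<le> i \<and> stern_deg i = k}) :: rat)
           = inverse (1 - 3 * fps_X) \<and>
         (\<forall>k. card {i::nat. 1 \<le> i \<and> stern_deg i = k} = 3 ^ k)"
proof -
  have card: "card (stern_level k) = 3 ^ k" and fin: "finite (stern_level k)" for k
    using stern_level_card by blast+
  have "inverse (1 - 3 * fps_X) = Abs_fps (\<lambda>k. (3 :: rat) ^ k)"
    using fps_inverse_geometric[of "3 :: rat"] by (simp add: fps_numeral_fps_const)
  then show ?thesis using card fin unfolding stern_level_def by simp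
qed

end
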